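(* One-step MinPop Matching can be computed recursively via failure links and failure pops: $$(h(u,c),H(u,c)) = \begin{cases}(\mathrm{null},[\,]) & \text{if } u=\mathrm{null},\\ (\delta(u,c),[\,]) & \text{elif } \delta(u,c)\neq\mathrm{null},\\ \big(h(f(u),c),\; F(u)+H(f(u),c)\big) & \text{otherwise.}\end{cases}$$
   Context: Setting: WordPiece tokenization with vocabulary $V$, suffix indicator string $\sharp$ (e.g. "##", possibly empty). A trie is built from $V$ with root $r$ and node $r_\sharp$ representing $\sharp$; it may be augmented with nodes for $\sqcup$ and $\sharp\sqcup$, where $\sqcup$ is a whitespace character not in the vocabulary alphabet (not added to $V$). $\delta(u,c)$ is the child of $u$ along edge $c$, or null. $\chi_v$ is the string of node $v$; $\gamma_w$ is the node representing $w$, or null. Length of $w$: $|w|$ if $w$ does not start with $\sharp$, else $|w|-|\sharp|$. $p_w$: longest (by this length) non-empty prefix $w'\in V$, $w'\notin\{\varepsilon,\sharp\}$, of $w$, required to start with $\sharp$ if $w$ does; $p_w=\varepsilon$ if none, and $p_\sharp=\varepsilon$. $q_w:=\sharp w''$ where $w=p_w w''$. MinPop Matching: $(g(w),G(w)) := (\gamma_w,[\,])$ if $\gamma_w\neq\mathrm{null}$; else $(\mathrm{null},[\,])$ if $p_w=\varepsilon$; else $(g(q_w),[p_w]+G(q_w))$. One-step: $(h(u,c),H(u,c)) := (\mathrm{null},[\,])$ if $u=\mathrm{null}$, else $(g(\chi_u c),G(\chi_u c))$. Failure link and failure pops of node $v$, with $w=\chi_v$: $(f(v),F(v)) := (\mathrm{null},[\,])$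 if $p_w=\varepsilon$, else $(g(q_w),\,[p_w]+G(q_w))$. *)

theory Defs
  imports Main "HOL-Library.Sublist"
begin

(* The suffix indicator is s (may be []),
   the vocabulary is V, the whitespace character is ws, and aug says whether the
   trie is augmented with the nodes for [ws] and s @ [ws]. *)

definition wlen :: "'a list \<Rightarrow> 'a list \<Rightarrow> nat" where
  "wlen s w = (if prefix s w then length w - length s else length w)"

definition cand :: "'a list \<Rightarrow> 'a list set \<Rightarrow> 'a list \<Rightarrow> 'a list \<Rightarrow> bool" where
  "cand s V w w' \<longleftrightarrow> prefix w' w \<and> w' \<in> V \<and> w' \<noteq> [] \<and> w' \<noteq> s \<and> (prefix s w \<longrightarrow> prefix s w')"

definition pw :: "'a list \<Rightarrow> 'a list set \<Rightarrow> 'a list \<Rightarrow> 'a list" where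
  "pw s V w = (if w = s \<or> \<not> (\<exists>w'. cand s V w w') then []
     else (THE w'. cand s V w w' \<and> (\<forall>w''. cand s V w w'' \<longrightarrow> wlen s w'' \<le> wlen s w')))"

definition qw :: "'a list \<Rightarrow> 'a list set \<Rightarrow> 'a list \<Rightarrow> 'a list" where
  "qw s V w = s @ drop (length (pw s V w)) w"

definition trie_nodes :: "'a list \<Rightarrow> 'a list set \<Rightarrow> bool \<Rightarrow> 'a \<Rightarrow> 'a list set" where
  "trie_nodes s V aug ws =
     {u. \<exists>v \<in> V \<union> {s} \<union> (if aug then {[ws], s @ [ws]} else {}). prefix u v}"

(* nodes are identified with their strings chi_v; None is null *)
definition gamma :: "'a list \<Rightarrow> 'a list set \<Rightarrow> bool \<Rightarrow> 'a \<Rightarrow> 'a list \<Rightarrow> 'a list option" where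
  "gamma s V aug ws w = (if w \<in> trie_nodes s V aug ws then Some w else None)"

definition delta :: "'a list \<Rightarrow> 'a list set \<Rightarrow> bool \<Rightarrow> 'a \<Rightarrow> 'a list option \<Rightarrow> 'a \<Rightarrow> 'a list option" where
  "delta s V aug ws u c = (case u of None \<Rightarrow> None | Some x \<Rightarrow> gamma s V aug ws (x @ [c]))"

lemma cand_wlen_inj:
  assumes "cand s V w a" "cand s V w b" "wlen s a = wlen s b"
  shows "a = b"
proof -
  have pa: "prefix a w" and pb: "prefix b w" using assms unfolding cand_def by auto
  have "prefix s a \<longleftrightarrow> prefix s w"
    using assms(1) pa prefix_order.trans unfolding cand_def by blast
  moreover have "prefix s b \<longleftrightarrow> prefix s w"
    using assms(2) pb prefix_order.trans unfolding cand_def by blast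
  ultimately have "length a = length b"
  proof (cases "prefix s w")
    case True
    then have "prefix s a" "prefix s b" using \<open>prefix s a \<longleftrightarrow> prefix s w\<close> \<open>prefix s b \<longleftrightarrow> prefix s w\<close> by auto
    then have "length s \<le> length a" "length s \<le> length b" by (auto dest: prefix_length_le)
    then show ?thesis using assms(3) \<open>prefix s a\<close> \<open>prefix s b\<close> unfolding wlen_def by auto
  next
    case False
    then have "\<not> prefix s a" "\<not> prefix s b" using \<open>prefix s a \<longleftrightarrow> prefix s w\<close> \<open>prefix s b \<longleftrightarrow> prefix s w\<close> by auto
    then show ?thesis using assms(3) unfolding wlen_def by auto
  qed
  then show ?thesis using pa pb prefix_length_prefix prefix_order.antisym by (metis order_refl)
qed

lemma cand_max_ex:
  assumes "\<exists>w'. cand s V w w'"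
  shows "\<exists>w'. cand s V w w' \<and> (\<forall>w''. cand s V w w'' \<longrightarrow> wlen s w'' \<le> wlen s w')"
proof -
  let ?S = "{w'. cand s V w w'}"
  have fin: "finite ?S"
    by (rule finite_subset[of _ "set (prefixes w)"]) (auto simp: cand_def)
  have ne: "?S \<noteq> {}" using assms by auto
  have "Max (wlen s ` ?S) \<in> wlen s ` ?S" using fin ne by (intro Max_in) auto
  then obtain m where m: "m \<in> ?S" "wlen s m = Max (wlen s ` ?S)" by auto
  have "\<forall>x \<in> ?S. wlen s x \<le> wlen s m" using fin m(2) by auto
  then have "m \<in> ?S \<and> (\<forall>x \<in> ?S. wlen s x \<le> wlen s m)" using m(1) by blast
  then show ?thesis by auto
qed

lemma pw_cand:
  assumes "pw s V w \<noteq> []"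
  shows "cand s V w (pw s V w)"
proof -
  have ex: "\<exists>w'. cand s V w w'" and ns: "w \<noteq> s" using assms unfolding pw_def by (auto split: if_splits)
  obtain m where m: "cand s V w m \<and> (\<forall>w''. cand s V w w'' \<longrightarrow> wlen s w'' \<le> wlen s m)"
    using cand_max_ex[OF ex] by blast
  have "(THE w'. cand s V w w' \<and> (\<forall>w''. cand s V w w'' \<longrightarrow> wlen s w'' \<le> wlen s w')) = m"
  proof (rule the_equality)
    show "cand s V w m \<and> (\<forall>w''. cand s V w w'' \<longrightarrow> wlen s w'' \<le> wlen s m)" by (rule m)
  next
    fix y assume y: "cand s V w y \<and> (\<forall>w''. cand s V w w'' \<longrightarrow> wlen s w'' \<le> wlen s y)"
    then have "wlen s y = wlen s m" using m by (meson le_antisym)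
    then show "y = m" using y m cand_wlen_inj by blast
  qed
  then show ?thesis using ex ns m unfolding pw_def by auto
qed

lemma qw_shorter:
  assumes "pw s V w \<noteq> []"
  shows "wlen s (qw s V w) < wlen s w"
proof -
  let ?p = "pw s V w"
  have c: "cand s V w ?p" by (rule pw_cand[OF assms])
  then have pp: "prefix ?p w" and ne: "?p \<noteq> []" and nes: "?p \<noteq> s"
    and ps: "prefix s w \<longrightarrow> prefix s ?p" unfolding cand_def by auto
  obtain r where w: "w = ?p @ r" using pp by (auto simp: prefix_def)
  have "drop (length ?p) w = r" using w by (metis append_eq_conv_conj)
  then have q: "qw s V w = s @ r" unfolding qw_def by simp
  show ?thesis
  proof (cases "prefix s w")
    case True
    then have "prefix s ?p" using ps by simp
    then have "length s < length ?p" using nes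
      by (metis prefix_length_le prefix_length_prefix prefix_order.antisym prefix_order.refl le_neq_implies_less)
    moreover have "length w = length ?p + length r" using w by (metis length_append)
    ultimately show ?thesis using True q unfolding wlen_def by auto
  next
    case False
    moreover have "length w = length ?p + length r" using w by (metis length_append)
    ultimately show ?thesis using q ne unfolding wlen_def by auto
  qed
qed

function minpop :: "'a list \<Rightarrow> 'a list set \<Rightarrow> bool \<Rightarrow> 'a \<Rightarrow> 'a list \<Rightarrow> 'a list option \<times> 'a list list" where
  "minpop s V aug ws w =
     (if gamma s V aug ws w \<noteq> None then (gamma s V aug ws w, [])
      else if pw s V w = [] then (None, [])
      else (fst (minpop s V aug ws (qw s V w)),
            [pw s V w] @ snd (minpop s V aug ws (qw s V w))))"
  by pat_completeness auto
termination
  by (relation "measure (\<lambda>(s, V, aug, ws, w). wlen s w)") (auto intro: qw_shorter)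

declare minpop.simps[simp del]

definition g :: "'a list \<Rightarrow> 'a list set \<Rightarrow> bool \<Rightarrow> 'a \<Rightarrow> 'a list \<Rightarrow> 'a list option" where
  "g s V aug ws w = fst (minpop s V aug ws w)"

definition G :: "'a list \<Rightarrow> 'a list set \<Rightarrow> bool \<Rightarrow> 'a \<Rightarrow> 'a list \<Rightarrow> 'a list list" where
  "G s V aug ws w = snd (minpop s V aug ws w)"

definition h :: "'a list \<Rightarrow> 'a list set \<Rightarrow> bool \<Rightarrow> 'a \<Rightarrow> 'a list option \<Rightarrow> 'a \<Rightarrow> 'a list option" where
  "h s V aug ws u c = (case u of None \<Rightarrow> None | Some x \<Rightarrow> g s V aug ws (x @ [c]))"

definition H :: "'a list \<Rightarrow> 'a list set \<Rightarrow> bool \<Rightarrow> 'a \<Rightarrow> 'a list option \<Rightarrow> 'a \<Rightarrow> 'a list list" where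
  "H s V aug ws u c = (case u of None \<Rightarrow> [] | Some x \<Rightarrow> G s V aug ws (x @ [c]))"

definition flink :: "'a list \<Rightarrow> 'a list set \<Rightarrow> bool \<Rightarrow> 'a \<Rightarrow> 'a list \<Rightarrow> 'a list option" where
  "flink s V aug ws x = (if pw s V x = [] then None else g s V aug ws (qw s V x))"

definition fpops :: "'a list \<Rightarrow> 'a list set \<Rightarrow> bool \<Rightarrow> 'a \<Rightarrow> 'a list \<Rightarrow> 'a list list" where
  "fpops s V aug ws x = (if pw s V x = [] then [] else [pw s V x] @ G s V aug ws (qw s V x))"

end

theory Submission
  imports Defs
begin

(* Off the trie, MinPop Matching of w is exactly one failure transition: g(w) = f(w) and
   G(w) = F(w).  If w c is off the trie, neither w c nor s is a vocabulary prefix of w c,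
   so p_{wc} = p_w and q_{wc} = q_w c.  Hence matching w c pops p_w and continues with
   q_w c, and matching q_w c (by induction along the MinPop recursion) means first
   matching q_w and then taking one step from g(q_w) = f(w). *)

lemma trie_nodes_prefix_closed:
  "prefix a b \<Longrightarrow> b \<in> trie_nodes s V aug ws \<Longrightarrow> a \<in> trie_nodes s V aug ws"
  unfolding trie_nodes_def using prefix_order.trans by blast

lemma vocab_in_trie_nodes: "v \<in> V \<Longrightarrow> v \<in> trie_nodes s V aug ws"
  unfolding trie_nodes_def by blast

lemma suffix_indicator_in_trie_nodes: "s \<in> trie_nodes s V aug ws"
  unfolding trie_nodes_def by blast

lemma cand_snoc_iff:
  assumes "w @ [c] \<notin> trie_nodes s V aug ws"
  shows "cand s V (w @ [c]) w' \<longleftrightarrow> cand s V w w'"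
proof -
  have "s \<noteq> w @ [c]" using assms suffix_indicator_in_trie_nodes by metis
  then have "prefix s (w @ [c]) \<longleftrightarrow> prefix s w" by (auto simp: prefix_snoc)
  moreover have "w' \<in> V \<Longrightarrow> prefix w' (w @ [c]) \<longleftrightarrow> prefix w' w"
    using assms vocab_in_trie_nodes by (fastforce simp: prefix_snoc)
  ultimately show ?thesis unfolding cand_def by blast
qed

lemma pw_snoc:
  assumes "w @ [c] \<notin> trie_nodes s V aug ws"
  shows "pw s V (w @ [c]) = pw s V w"
proof -
  have "w @ [c] \<noteq> s" using assms suffix_indicator_in_trie_nodes by metis
  moreover have "\<not> cand s V s w'" for w'
    unfolding cand_def using prefix_order.antisym by blast
  ultimately show ?thesis
    unfolding pw_def cand_snoc_iff[OF assms, abs_def] by auto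
qed

lemma qw_snoc:
  assumes "w @ [c] \<notin> trie_nodes s V aug ws"
  shows "qw s V (w @ [c]) = qw s V w @ [c]"
proof -
  have "length (pw s V w) \<le> length w"
    using pw_cand[of s V w] by (cases "pw s V w = []") (auto simp: cand_def prefix_length_le)
  then show ?thesis unfolding qw_def pw_snoc[OF assms] by simp
qed

lemma minpop_in_trie:
  "w \<in> trie_nodes s V aug ws \<Longrightarrow> minpop s V aug ws w = (Some w, [])"
  by (subst minpop.simps) (simp add: gamma_def)

lemma minpop_off_trie:
  "w \<notin> trie_nodes s V aug ws \<Longrightarrow>
    minpop s V aug ws w = (flink s V aug ws w, fpops s V aug ws w)"
  by (subst minpop.simps) (simp add: gamma_def flink_def fpops_def g_def G_def)

lemma minpop_snoc:
  "minpop s V aug ws (w @ [c]) =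
    (h s V aug ws (g s V aug ws w) c, G s V aug ws w @ H s V aug ws (g s V aug ws w) c)"
proof (induction s V aug ws w rule: minpop.induct)
  case (1 s V aug ws w)
  show ?case
  proof (cases "w \<in> trie_nodes s V aug ws")
    case True
    then show ?thesis by (simp add: minpop_in_trie g_def G_def h_def H_def)
  next
    case False
    then have off: "w @ [c] \<notin> trie_nodes s V aug ws"
      using trie_nodes_prefix_closed[of w "w @ [c]"] by auto
    have gamma_none: "gamma s V aug ws w = None"
      using False by (simp add: gamma_def)
    have gG: "(g s V aug ws w, G s V aug ws w) = (flink s V aug ws w, fpops s V aug ws w)"
      using minpop_off_trie[OF False] by (simp add: g_def G_def)
    show ?thesis
    proof (cases "pw s V w = []")
      case True
      then show ?thesis
        using gG by (simp add: minpop_off_trie[OF off] flink_def fpops_def pw_snoc[OF off] h_def H_def)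
    next
      case False
      have IH: "minpop s V aug ws (qw s V w @ [c]) =
          (h s V aug ws (g s V aug ws (qw s V w)) c,
           G s V aug ws (qw s V w) @ H s V aug ws (g s V aug ws (qw s V w)) c)"
        using "1" gamma_none False by simp
      show ?thesis
        using gG False IH
        by (simp add: minpop_off_trie[OF off] flink_def fpops_def pw_snoc[OF off] qw_snoc[OF off] g_def G_def)
    qed
  qed
qed

lemma minpop_snoc_off_trie:
  assumes "x @ [c] \<notin> trie_nodes s V aug ws"
  shows "minpop s V aug ws (x @ [c]) =
    (h s V aug ws (flink s V aug ws x) c, fpops s V aug ws x @ H s V aug ws (flink s V aug ws x) c)"
proof (cases "pw s V x = []")
  case True
  then show ?thesis
    by (simp add: minpop_off_trie[OF assms] flink_def fpops_def pw_snoc[OF assms] h_def H_def)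
next
  case False
  then show ?thesis
    using minpop_snoc[of s V aug ws "qw s V x" c]
    by (simp add: minpop_off_trie[OF assms] flink_def fpops_def pw_snoc[OF assms] qw_snoc[OF assms]
        g_def G_def)
qed

theorem lemma4:
  fixes s :: "'a list" and V :: "'a list set" and aug :: bool and ws :: 'a
    and u :: "'a list option" and c :: 'a
  assumes "finite V"
    and "\<forall>v \<in> V. ws \<notin> set v"
    and "ws \<notin> set s"
    and "u = None \<or> (\<exists>x. u = Some x \<and> x \<in> trie_nodes s V aug ws)"
  shows "(h s V aug ws u c, H s V aug ws u c) =
    (case u of
       None \<Rightarrow> (None, [])
     | Some x \<Rightarrow>
         (if delta s V aug ws u c \<noteq> None then (delta s V aug ws u c, [])
          else (h s V aug ws (flink s V aug ws x) c,
                fpops s V aug ws x @ H s V aug ws (flink s V aug ws x) c)))"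
proof (cases u)
  case None
  then show ?thesis by (simp add: h_def H_def)
next
  case (Some x)
  then have hH: "(h s V aug ws u c, H s V aug ws u c) = minpop s V aug ws (x @ [c])"
    by (simp add: h_def H_def g_def G_def)
  show ?thesis
  proof (cases "x @ [c] \<in> trie_nodes s V aug ws")
    case True
    then show ?thesis using Some hH by (simp add: minpop_in_trie delta_def gamma_def)
  next
    case False
    then show ?thesis using Some hH by (simp add: minpop_snoc_off_trie delta_def gamma_def)
  qed
qed

end
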